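(* There exist a subgroup $F$ of $\mathrm{SL}_3(\mathbb{Z})$ which is free on two generators, a linear form $f: \mathbb{Q}^3 \to \mathbb{Q}$ with rational coefficients, and a vector $u \in \mathbb{Q}^3$, such that for all $g \in F$: (1) $f(gu) \ge 0$, and (2) $f(gu) = 0$ if and only if $g = 1$. *)

theory Defs
  imports "HOL-Analysis.Analysis"
begin

text \<open>SL_3(Z), realised inside the 3x3 rational matrices (so that it acts on Q^3).\<close>
definition SL3Z :: "(rat^3^3) set" where
  "SL3Z = {A. (\<forall>i j. A $ i $ j \<in> \<int>) \<and> det A = 1}"

definition subgroup_SL3Z :: "(rat^3^3) set \<Rightarrow> bool" where
  "subgroup_SL3Z F \<longleftrightarrow> F \<subseteq> SL3Z \<and> mat 1 \<in> F \<and>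
     (\<forall>g\<in>F. \<forall>h\<in>F. g ** h \<in> F) \<and> (\<forall>g\<in>F. matrix_inv g \<in> F)"

text \<open>Words in two letters: a letter is (which generator, inverted?);
  True = first generator a, False = second generator b.\<close>
fun letter_eval :: "rat^3^3 \<Rightarrow> rat^3^3 \<Rightarrow> bool \<times> bool \<Rightarrow> rat^3^3" where
  "letter_eval a b (x, e) = (let g = (if x then a else b) in if e then matrix_inv g else g)"

definition word_eval :: "rat^3^3 \<Rightarrow> rat^3^3 \<Rightarrow> (bool \<times> bool) list \<Rightarrow> rat^3^3" where
  "word_eval a b w = foldr (\<lambda>l M. letter_eval a b l ** M) w (mat 1)"

definition reduced_word :: "(bool \<times> bool) list \<Rightarrow> bool" where
  "reduced_word w \<longleftrightarrow> (\<forall>i. Suc i < length w \<longrightarrow>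
      \<not> (fst (w ! i) = fst (w ! Suc i) \<and> snd (w ! i) \<noteq> snd (w ! Suc i)))"

definition free_on_two :: "(rat^3^3) set \<Rightarrow> rat^3^3 \<Rightarrow> rat^3^3 \<Rightarrow> bool" where
  "free_on_two F a b \<longleftrightarrow> F = range (word_eval a b) \<and>
     (\<forall>w. reduced_word w \<and> w \<noteq> [] \<longrightarrow> word_eval a b w \<noteq> mat 1)"

end

theory Submission
  imports Defs
begin

text \<open>
  The generators are the images of the shears \<open>[[1,3],[0,1]]\<close> and \<open>[[1,0],[3,1]]\<close> under the
  symmetric square \<open>SL\<^sub>2 \<rightarrow> SL\<^sub>3\<close>, which acts on Veronese vectors \<open>(p\<^sup>2, pq, q\<^sup>2)\<close> through the
  action of \<open>SL\<^sub>2\<close> on \<open>(p, q)\<close>. The form \<open>f = (1, -2, 1)\<close> takes the value \<open>(p - q)\<^sup>2\<close> on the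
  Veronese vector of \<open>(p, q)\<close>, and \<open>u = (1, 1, 1)\<close> is the Veronese vector of \<open>(1, 1)\<close>.
  A ping-pong argument with the four cones \<open>|q| < |p|, \<plusminus>pq \<ge> 0\<close> and \<open>|p| < |q|, \<plusminus>pq \<ge> 0\<close>
  shows that a nonempty reduced word moves \<open>(1, 1)\<close> into the cone of its first letter, hence
  off the diagonal \<open>p = q\<close>. This gives at once freeness and \<open>f(gu) > 0\<close> for \<open>g \<noteq> 1\<close>.
\<close>

lemma matrix_inv_cancel:
  fixes A :: "'a::semiring_1^'n^'n"
  assumes "invertible A"
  shows "A ** matrix_inv A = mat 1" and "matrix_inv A ** A = mat 1"
  using someI_ex[OF assms[unfolded invertible_def]] by (simp_all add: matrix_inv_def)

lemma matrix_inv_unique: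
  fixes A B :: "'a::semiring_1^'n^'n"
  assumes "A ** B = mat 1" and "B ** A = mat 1"
  shows "matrix_inv A = B"
proof -
  have "invertible A"
    using assms unfolding invertible_def by blast
  then have "B ** (A ** matrix_inv A) = B"
    by (simp add: matrix_inv_cancel)
  then show ?thesis
    by (simp add: matrix_mul_assoc assms(2))
qed

lemma Ints_det:
  fixes A :: "'a::comm_ring_1^'n^'n"
  assumes "\<And>i j. A $ i $ j \<in> \<int>"
  shows "det A \<in> \<int>"
  unfolding det_def using assms
  by (intro Ints_sum Ints_mult Ints_prod) (auto simp: sign_def)

text \<open>Cramer's rule: the entries of the inverse are determinants of integer matrices.\<close>

lemma Ints_matrix_inv:
  fixes A :: "'a::field^'n^'n"
  assumes ints: "\<And>i j. A $ i $ j \<in> \<int>" and det: "det A = 1"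
  shows "matrix_inv A $ i $ j \<in> \<int>"
proof -
  let ?B = "matrix_inv A"
  let ?x = "\<chi> k. ?B $ k $ j"
  have AB: "A ** ?B = mat 1"
    using det by (simp add: matrix_inv_cancel invertible_det_nz)
  have Ax: "(A *v ?x) $ r = mat 1 $ r $ j" for r
  proof -
    have "(A *v ?x) $ r = (A ** ?B) $ r $ j"
      by (simp add: matrix_vector_mult_def matrix_matrix_mult_def)
    with AB show ?thesis
      by simp
  qed
  have "?B $ i $ j = det (\<chi> r c. if c = i then (A *v ?x) $ r else A $ r $ c)"
    using cramer_lemma[where A = A and k = i and x = ?x] det by simp
  also have "\<dots> \<in> \<int>"
    by (rule Ints_det) (simp add: Ax ints mat_def)
  finally show ?thesis .
qed

lemma SL3Z_mult:
  assumes "A \<in> SL3Z" and "B \<in> SL3Z"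
  shows "A ** B \<in> SL3Z"
  using assms unfolding SL3Z_def
  by (auto simp: det_mul) (auto simp: matrix_matrix_mult_def intro!: Ints_sum Ints_mult)

lemma mat_1_SL3Z: "mat 1 \<in> SL3Z"
  by (simp add: SL3Z_def) (simp add: mat_def)

lemma SL3Z_invertible: "A \<in> SL3Z \<Longrightarrow> invertible A"
  by (simp add: SL3Z_def invertible_det_nz)

lemma SL3Z_matrix_inv:
  assumes "A \<in> SL3Z"
  shows "matrix_inv A \<in> SL3Z"
proof -
  have "det A * det (matrix_inv A) = 1"
    using assms by (simp add: matrix_inv_cancel SL3Z_invertible flip: det_mul)
  with assms show ?thesis
    by (auto simp: SL3Z_def Ints_matrix_inv)
qed

definition letter_inv :: "bool \<times> bool \<Rightarrow> bool \<times> bool" where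
  "letter_inv l = (fst l, \<not> snd l)"

lemma letter_inv_letter_inv [simp]: "letter_inv (letter_inv l) = l"
  by (simp add: letter_inv_def)

lemma reduced_word_iff:
  "reduced_word w \<longleftrightarrow> (\<forall>i. Suc i < length w \<longrightarrow> w ! Suc i \<noteq> letter_inv (w ! i))"
  by (auto simp: reduced_word_def letter_inv_def prod_eq_iff)

lemma reduced_word_Nil [simp]: "reduced_word []"
  and reduced_word_singleton [simp]: "reduced_word [l]"
  by (simp_all add: reduced_word_def)

lemma reduced_word_Cons_Cons [simp]:
  "reduced_word (l # l' # w) \<longleftrightarrow> l' \<noteq> letter_inv l \<and> reduced_word (l' # w)"
  by (auto simp: reduced_word_iff less_Suc_eq_0_disj)

lemma reduced_word_ConsD: "reduced_word (l # w) \<Longrightarrow> reduced_word w"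
  by (cases w) auto

lemma word_eval_Nil [simp]: "word_eval a b [] = mat 1"
  and word_eval_Cons [simp]: "word_eval a b (l # w) = letter_eval a b l ** word_eval a b w"
  by (simp_all add: word_eval_def)

lemma word_eval_append: "word_eval a b (v @ w) = word_eval a b v ** word_eval a b w"
  by (induction v) (simp_all add: matrix_mul_assoc)

lemma letter_eval_mult_letter_inv:
  assumes "invertible a" and "invertible b"
  shows "letter_eval a b l ** letter_eval a b (letter_inv l) = mat 1"
  using assms by (cases l) (auto simp: letter_inv_def matrix_inv_cancel)

fun free_reduce :: "(bool \<times> bool) list \<Rightarrow> (bool \<times> bool) list" where
  "free_reduce [] = []"
| "free_reduce (l # w) =
     (case free_reduce w of
        [] \<Rightarrow> [l]
      | l' # w' \<Rightarrow> if l' = letter_inv l then w' else l # l' # w')"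

lemma reduced_word_free_reduce: "reduced_word (free_reduce w)"
  by (induction w) (auto split: list.split dest: reduced_word_ConsD)

lemma word_eval_free_reduce:
  assumes "invertible a" and "invertible b"
  shows "word_eval a b (free_reduce w) = word_eval a b w"
proof (induction w)
  case (Cons l w)
  show ?case
  proof (cases "free_reduce w")
    case (Cons l' w')
    have "letter_eval a b l ** (letter_eval a b (letter_inv l) ** word_eval a b w') = word_eval a b w'"
      by (simp add: letter_eval_mult_letter_inv assms matrix_mul_assoc)
    with Cons show ?thesis
      using Cons.IH by auto
  qed (use Cons.IH in simp)
qed simp

definition word_inv :: "(bool \<times> bool) list \<Rightarrow> (bool \<times> bool) list" where
  "word_inv w = rev (map letter_inv w)"

lemma word_inv_word_inv [simp]: "word_inv (word_inv w) = w"
  by (simp add: word_inv_def rev_map comp_def)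

lemma word_eval_mult_word_inv:
  assumes "invertible a" and "invertible b"
  shows "word_eval a b w ** word_eval a b (word_inv w) = mat 1"
proof (induction w)
  case (Cons l w)
  have "word_eval a b (l # w) ** word_eval a b (word_inv (l # w)) =
      letter_eval a b l ** (word_eval a b w ** word_eval a b (word_inv w)) ** letter_eval a b (letter_inv l)"
    by (simp add: word_inv_def word_eval_append matrix_mul_assoc)
  also have "\<dots> = mat 1"
    using Cons.IH by (simp add: letter_eval_mult_letter_inv assms)
  finally show ?case .
qed (simp add: word_inv_def)

lemma matrix_inv_word_eval:
  assumes "invertible a" and "invertible b"
  shows "matrix_inv (word_eval a b w) = word_eval a b (word_inv w)"
  using word_eval_mult_word_inv[OF assms, of w] word_eval_mult_word_inv[OF assms, of "word_inv w"]
  by (intro matrix_inv_unique) simp_all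

lemma word_eval_SL3Z:
  assumes "a \<in> SL3Z" and "b \<in> SL3Z"
  shows "word_eval a b w \<in> SL3Z"
proof -
  have "letter_eval a b l \<in> SL3Z" for l
    using assms by (cases l) (auto simp: SL3Z_matrix_inv)
  then show ?thesis
    by (induction w) (simp_all add: mat_1_SL3Z SL3Z_mult)
qed

lemma subgroup_SL3Z_range_word_eval:
  assumes "a \<in> SL3Z" and "b \<in> SL3Z"
  shows "subgroup_SL3Z (range (word_eval a b))"
  unfolding subgroup_SL3Z_def
proof (intro conjI ballI)
  show "range (word_eval a b) \<subseteq> SL3Z"
    using word_eval_SL3Z[OF assms] by blast
  show "mat 1 \<in> range (word_eval a b)"
    by (metis rangeI word_eval_Nil)
  show "g ** h \<in> range (word_eval a b)" if "g \<in> range (word_eval a b)" "h \<in> range (word_eval a b)" for g h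
    using that by (auto simp flip: word_eval_append)
  show "matrix_inv g \<in> range (word_eval a b)" if "g \<in> range (word_eval a b)" for g
    using that assms by (auto simp: matrix_inv_word_eval SL3Z_invertible)
qed

section \<open>Shears acting on Veronese vectors\<close>

definition veronese :: "rat \<times> rat \<Rightarrow> rat^3" where
  "veronese z = vector [(fst z)\<^sup>2, fst z * snd z, (snd z)\<^sup>2]"

text \<open>The images of \<open>[[1,t],[0,1]]\<close> and \<open>[[1,0],[t,1]]\<close> under the symmetric square.\<close>

definition upper_shear3 :: "rat \<Rightarrow> rat^3^3" where
  "upper_shear3 t = vector [vector [1, 2 * t, t\<^sup>2], vector [0, 1, t], vector [0, 0, 1]]"

definition lower_shear3 :: "rat \<Rightarrow> rat^3^3" where
  "lower_shear3 t = vector [vector [1, 0, 0], vector [t, 1, 0], vector [t\<^sup>2, 2 * t, 1]]"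

lemma upper_shear3_veronese: "upper_shear3 t *v veronese (p, q) = veronese (p + t * q, q)"
  and lower_shear3_veronese: "lower_shear3 t *v veronese (p, q) = veronese (p, q + t * p)"
  by (simp_all add: veronese_def upper_shear3_def lower_shear3_def matrix_vector_mult_def vec_eq_iff
      forall_3 sum_3 power2_eq_square algebra_simps)

lemma matrix_inv_upper_shear3: "matrix_inv (upper_shear3 t) = upper_shear3 (- t)"
  and matrix_inv_lower_shear3: "matrix_inv (lower_shear3 t) = lower_shear3 (- t)"
  by (intro matrix_inv_unique;
      simp add: upper_shear3_def lower_shear3_def matrix_matrix_mult_def mat_def vec_eq_iff
        forall_3 sum_3 power2_eq_square algebra_simps)+

lemma upper_shear3_SL3Z: "t \<in> \<int> \<Longrightarrow> upper_shear3 t \<in> SL3Z"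
  and lower_shear3_SL3Z: "t \<in> \<int> \<Longrightarrow> lower_shear3 t \<in> SL3Z"
  by (auto simp: SL3Z_def upper_shear3_def lower_shear3_def det_3 forall_3)

definition shear_coeff :: "rat \<Rightarrow> bool \<Rightarrow> rat" where
  "shear_coeff t e = (if e then - t else t)"

fun letter_shear :: "rat \<Rightarrow> bool \<times> bool \<Rightarrow> rat \<times> rat \<Rightarrow> rat \<times> rat" where
  "letter_shear t (True, e) (p, q) = (p + shear_coeff t e * q, q)"
| "letter_shear t (False, e) (p, q) = (p, q + shear_coeff t e * p)"

lemma letter_eval_veronese:
  "letter_eval (upper_shear3 t) (lower_shear3 t) l *v veronese z = veronese (letter_shear t l z)"
  by (cases l; cases z)
    (auto simp: shear_coeff_def matrix_inv_upper_shear3 matrix_inv_lower_shear3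
      upper_shear3_veronese lower_shear3_veronese)

lemma word_eval_veronese:
  "word_eval (upper_shear3 t) (lower_shear3 t) w *v veronese z = veronese (foldr (letter_shear t) w z)"
  by (induction w) (simp_all add: letter_eval_veronese flip: matrix_vector_mul_assoc)

lemma diagonal_form_veronese:
  "(\<Sum>i\<in>UNIV. (vector [1, -2, 1] :: rat^3) $ i * veronese (p, q) $ i) = (p - q)\<^sup>2"
  by (simp add: veronese_def sum_3 power2_eq_square algebra_simps)

section \<open>Ping-pong\<close>

lemma shear_ping_pong:
  fixes p q t :: "'a::linordered_idom"
  assumes t: "2 \<le> \<bar>t\<bar>" and pq: "\<bar>p\<bar> < \<bar>q\<bar> \<or> \<bar>q\<bar> < \<bar>p\<bar> \<and> 0 \<le> p * (t * q)"
  shows "\<bar>q\<bar> < \<bar>p + t * q\<bar> \<and> 0 \<le> (p + t * q) * (t * q)"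
proof -
  define s where "s = t * q"
  have s: "2 * \<bar>q\<bar> \<le> \<bar>s\<bar>"
    unfolding s_def using mult_right_mono[OF t abs_ge_zero] by (simp add: abs_mult)
  have "\<bar>q\<bar> < \<bar>p + s\<bar> \<and> 0 \<le> (p + s) * s"
  proof (cases "\<bar>p\<bar> < \<bar>q\<bar>")
    case True
    have "- (\<bar>p\<bar> * \<bar>s\<bar>) \<le> p * s"
      by (metis abs_ge_minus_self abs_mult minus_le_iff)
    moreover have "\<bar>p\<bar> * \<bar>s\<bar> \<le> \<bar>s\<bar> * \<bar>s\<bar>"
      using True s by (intro mult_right_mono) simp_all
    moreover have "\<bar>s\<bar> - \<bar>p\<bar> \<le> \<bar>p + s\<bar>"
      using abs_triangle_ineq2[of s "- p"] by (simp add: add.commute)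
    ultimately show ?thesis
      using True s by (simp add: distrib_right abs_mult_self_eq)
  next
    case False
    with pq have "\<bar>q\<bar> < \<bar>p\<bar>" "0 \<le> p * s"
      by (simp_all add: s_def)
    then show ?thesis
      by (auto simp: distrib_right zero_le_mult_iff)
  qed
  then show ?thesis
    by (simp add: s_def)
qed

fun shear_cone :: "rat \<Rightarrow> bool \<times> bool \<Rightarrow> (rat \<times> rat) set" where
  "shear_cone t (True, e) = {(p, q). \<bar>q\<bar> < \<bar>p\<bar> \<and> 0 \<le> p * (shear_coeff t e * q)}"
| "shear_cone t (False, e) = {(p, q). \<bar>p\<bar> < \<bar>q\<bar> \<and> 0 \<le> q * (shear_coeff t e * p)}"

lemma shear_cone_off_diagonal: "(p, q) \<in> shear_cone t l \<Longrightarrow> p \<noteq> q"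
  by (cases "fst l"; cases l) auto

lemma letter_shear_in_cone:
  assumes "2 \<le> \<bar>t\<bar>" and "z \<in> shear_cone t l'" and "l' \<noteq> letter_inv l"
  shows "letter_shear t l z \<in> shear_cone t l"
proof -
  obtain x e x' e' p q where l: "l = (x, e)" and l': "l' = (x', e')" and z: "z = (p, q)"
    by (metis prod.exhaust)
  have c: "2 \<le> \<bar>shear_coeff t e\<bar>"
    using assms(1) by (simp add: shear_coeff_def)
  show ?thesis
    using assms(2,3) shear_ping_pong[OF c, of p q] shear_ping_pong[OF c, of q p]
    by (cases x; cases x') (auto simp: l l' z letter_inv_def)
qed

text \<open>The start \<open>(1, 1)\<close> lies in no cone; \<open>|t| \<ge> 3\<close> is what makes the first letter move it into
  one (for \<open>t = 2\<close> the inverse of the first generator would send it to \<open>(-1, 1)\<close>).\<close>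

lemma letter_shear_one_one_in_cone:
  assumes "3 \<le> \<bar>t\<bar>"
  shows "letter_shear t l (1, 1) \<in> shear_cone t l"
  using assms by (cases "fst l"; cases l) (auto simp: shear_coeff_def zero_le_mult_iff)

lemma foldr_letter_shear_cone:
  assumes "3 \<le> \<bar>t\<bar>" and "reduced_word w" and "w \<noteq> []"
  shows "foldr (letter_shear t) w (1, 1) \<in> shear_cone t (hd w)"
  using assms(2,3)
proof (induction w)
  case (Cons l w)
  show ?case
  proof (cases w)
    case (Cons l' w')
    with Cons.IH Cons.prems have "foldr (letter_shear t) w (1, 1) \<in> shear_cone t l'"
      "l' \<noteq> letter_inv l"
      by auto
    then show ?thesis
      using assms(1) letter_shear_in_cone by (simp add: Cons)
  qed (simp add: letter_shear_one_one_in_cone assms(1))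
qed simp

lemma shear_orbit_diagonal_form:
  assumes "3 \<le> \<bar>t\<bar>" and "reduced_word w"
  defines "v \<equiv> word_eval (upper_shear3 t) (lower_shear3 t) w *v veronese (1, 1)"
  shows "0 \<le> (\<Sum>i\<in>UNIV. (vector [1, -2, 1] :: rat^3) $ i * v $ i)"
    and "(\<Sum>i\<in>UNIV. (vector [1, -2, 1] :: rat^3) $ i * v $ i) = 0 \<longleftrightarrow> w = []"
proof -
  obtain p q where pq: "foldr (letter_shear t) w (1, 1) = (p, q)"
    by fastforce
  have v: "(\<Sum>i\<in>UNIV. (vector [1, -2, 1] :: rat^3) $ i * v $ i) = (p - q)\<^sup>2"
    by (simp add: v_def word_eval_veronese pq diagonal_form_veronese)
  have "p \<noteq> q" if "w \<noteq> []"
    using foldr_letter_shear_cone[OF assms(1,2) that] shear_cone_off_diagonal by (simp add: pq)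
  moreover have "p = q" if "w = []"
    using pq that by simp
  ultimately have "p = q \<longleftrightarrow> w = []"
    by blast
  then show "0 \<le> (\<Sum>i\<in>UNIV. (vector [1, -2, 1] :: rat^3) $ i * v $ i)"
    and "(\<Sum>i\<in>UNIV. (vector [1, -2, 1] :: rat^3) $ i * v $ i) = 0 \<longleftrightarrow> w = []"
    by (simp_all add: v)
qed

lemma word_eval_shears_eq_mat_1_iff:
  assumes "3 \<le> \<bar>t\<bar>" and "reduced_word w"
  shows "word_eval (upper_shear3 t) (lower_shear3 t) w = mat 1 \<longleftrightarrow> w = []"
  using shear_orbit_diagonal_form(2)[OF assms]
  by (auto simp: diagonal_form_veronese)

theorem theorem7:
  shows "\<exists>(F :: (rat^3^3) set) (a :: rat^3^3) (b :: rat^3^3) (c :: rat^3) (u :: rat^3).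
           subgroup_SL3Z F \<and> free_on_two F a b \<and>
           (\<forall>g\<in>F. (\<Sum>i\<in>UNIV. c $ i * (g *v u) $ i) \<ge> 0 \<and>
                   ((\<Sum>i\<in>UNIV. c $ i * (g *v u) $ i) = 0 \<longleftrightarrow> g = mat 1))"
proof -
  let ?a = "upper_shear3 3" and ?b = "lower_shear3 3"
  let ?F = "range (word_eval ?a ?b)"
  let ?f = "\<lambda>g. \<Sum>i\<in>UNIV. (vector [1, -2, 1] :: rat^3) $ i * (g *v veronese (1, 1)) $ i"
  have gens: "?a \<in> SL3Z" "?b \<in> SL3Z"
    by (simp_all add: upper_shear3_SL3Z lower_shear3_SL3Z)
  have "subgroup_SL3Z ?F"
    using subgroup_SL3Z_range_word_eval[OF gens] .
  moreover have "free_on_two ?F ?a ?b"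
    using word_eval_shears_eq_mat_1_iff[of 3] by (simp add: free_on_two_def)
  moreover have "0 \<le> ?f g \<and> (?f g = 0 \<longleftrightarrow> g = mat 1)" if "g \<in> ?F" for g
  proof -
    from that obtain w where "g = word_eval ?a ?b (free_reduce w)"
      using word_eval_free_reduce gens SL3Z_invertible by (metis rangeE)
    then show ?thesis
      using shear_orbit_diagonal_form[of 3] word_eval_shears_eq_mat_1_iff[of 3]
        reduced_word_free_reduce by simp
  qed
  ultimately have "subgroup_SL3Z ?F \<and> free_on_two ?F ?a ?b \<and>
      (\<forall>g\<in>?F. 0 \<le> ?f g \<and> (?f g = 0 \<longleftrightarrow> g = mat 1))"
    by blast
  then show ?thesis
    by (intro exI)
qed

end
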